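(* Let $\mathbf U$ be a real $3\times3$ positive-definite symmetric matrix, $|\hat{\mathbf e}|=1$, $\hat{\mathbf U}=(-\mathbf I+2\hat{\mathbf e}\otimes\hat{\mathbf e})\mathbf U(-\mathbf I+2\hat{\mathbf e}\otimes\hat{\mathbf e})$, and let $\hat{\mathbf R}\in\mathrm{SO}(3)$, nonzero $\mathbf a,\mathbf n\in\mathbb R^3$ satisfy $\hat{\mathbf R}\hat{\mathbf U}=\mathbf U+\mathbf a\otimes\mathbf n$. Suppose the cofactor conditions hold: (CC1) the middle eigenvalue of $\mathbf U$ equals $1$; (CC2) $\mathbf a\cdot\mathbf U\,\mathrm{cof}(\mathbf U^2-\mathbf I)\mathbf n=0$; (CC3) $\mathrm{tr}\,\mathbf U^2-\det\mathbf U^2-\frac{|\mathbf a|^2|\mathbf n|^2}{4}-2\ge0$. For $f\in[0,1]$ let $\mathbf C_f=(\mathbf U+f\,\mathbf n\otimes\mathbf a)(\mathbf U+f\,\mathbf a\otimes\mathbf n)$, with middle eigenvalue $1$ and other eigenvalues $\lambda_1(f)^2\le1\le\lambda_3(f)^2$ ($\lambda_1(f),\lambda_3(f)>0$), and let $\mathbf v_1(f),\mathbf v_3(f)$ be orthonormal eigenvectors of $\mathbf C_f$ for $\lambda_1(f)^2,\lambda_3(f)^2$. Then for each $f\in[0,1]$ with $f\neq1/2$ there are two distinct solutions $(\mathbf R_f^\kappa\in\mathrm{SO}(3),\ \mathbf b_f^\kappa\otimes\mathbf m_f^\kappa)$, $\kappa\in\{\pm1\}$, of $$\mathbf R\big[f(\mathbf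 U+\mathbf a\otimes\mathbf n)+(1-f)\mathbf U\big]-\mathbf I=\mathbf b\otimes\mathbf m,$$ and these are given by $$\mathbf b_f^\kappa=\frac{\rho}{\sqrt{\lambda_3(f)^2-\lambda_1(f)^2}}\Big(\lambda_3(f)\sqrt{1-\lambda_1(f)^2}\,\mathbf v_1(f)+\kappa\,\lambda_1(f)\sqrt{\lambda_3(f)^2-1}\,\mathbf v_3(f)\Big),$$ $$\mathbf m_f^\kappa=\frac1\rho\,\frac{\lambda_3(f)-\lambda_1(f)}{\sqrt{\lambda_3(f)^2-\lambda_1(f)^2}}\Big(-\sqrt{1-\lambda_1(f)^2}\,\mathbf v_1(f)+\kappa\sqrt{\lambda_3(f)^2-1}\,\mathbf v_3(f)\Big),$$ for $\kappa\in\{\pm1\}$ and some $\rho\neq0$ (which does not affect $\mathbf b_f^\kappa\otimes\mathbf m_f^\kappa$).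
   Context: $\mathbf a\otimes\mathbf n$ is the matrix $\mathbf x\mapsto(\mathbf n\cdot\mathbf x)\mathbf a$; $\mathrm{cof}\,\mathbf A$ is the cofactor matrix of $\mathbf A$. Solutions are distinguished by the pair $(\mathbf R,\mathbf b\otimes\mathbf m)$. *)

theory Defs
  imports "HOL-Analysis.Analysis"
begin

definition outer :: "real^3 \<Rightarrow> real^3 \<Rightarrow> real^3^3" where
  "outer a n = (\<chi> i j. a $ i * n $ j)"

text \<open>Cofactor matrix of a 3x3 matrix (cyclic index formula; indices of type 3 wrap mod 3).\<close>
definition cof :: "real^3^3 \<Rightarrow> real^3^3" where
  "cof A = (\<chi> i j. A $ (i+1) $ (j+1) * A $ (i+2) $ (j+2) - A $ (i+1) $ (j+2) * A $ (i+2) $ (j+1))"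

definition SO3 :: "(real^3^3) set" where
  "SO3 = {R. orthogonal_matrix R \<and> det R = 1}"

definition pos_def_sym :: "real^3^3 \<Rightarrow> bool" where
  "pos_def_sym U \<longleftrightarrow> transpose U = U \<and> (\<forall>x. x \<noteq> 0 \<longrightarrow> x \<bullet> (U *v x) > 0)"

definition middle_eigenvalue :: "real^3^3 \<Rightarrow> real \<Rightarrow> bool" where
  "middle_eigenvalue A mu \<longleftrightarrow> (\<exists>e1 e2 e3 l1 l3.
     norm e1 = 1 \<and> norm e2 = 1 \<and> norm e3 = 1 \<and>
     e1 \<bullet> e2 = 0 \<and> e1 \<bullet> e3 = 0 \<and> e2 \<bullet> e3 = 0 \<and>
     A *v e1 = l1 *\<^sub>R e1 \<and> A *v e2 = mu *\<^sub>R e2 \<and> A *v e3 = l3 *\<^sub>R e3 \<and>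
     l1 \<le> mu \<and> mu \<le> l3)"

end

theory Submission
  imports Defs
begin

(*
  Let F_f = U + f a \<otimes> n and C_f = F_f\<^sup>T F_f.  The twin equation says that U + a \<otimes> n is a
  rotation of the half-turn conjugate of U, so C_1 is conjugate to U\<^sup>2: det (C_1 - I) =
  det (U\<^sup>2 - I) = 0 by CC1, tr C_1 = tr U\<^sup>2 and det F_1 = det U.  Now det F_f is affine in f,
  hence constant; by CC2, det (C_f - I) is f\<^sup>2 times its value at f = 1, hence 0; and
  tr C_f - det C_f - 2 is the CC3 quantity plus |a|\<^sup>2 |n|\<^sup>2 (f - 1/2)\<^sup>2, positive for f \<noteq> 1/2.
  Hence 1 is the middle eigenvalue of C_f and l1 < 1 < l3.

  For such C = F\<^sup>T F with det F > 0, the solutions of R F - I = b \<otimes> m are those of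
  (I + m \<otimes> b)(I + b \<otimes> m) = C, det (I + b \<otimes> m) > 0.  In the eigenframe of C this is a
  small polynomial system in the components of b and m, whose solutions are exactly the two
  Ball-James pairs \<kappa> = \<plusminus>1; the sign condition discards the spurious root.
*)

lemma transpose_add: "transpose (A + B) = transpose A + transpose (B :: 'a::semiring_1^'n^'m)"
  by (simp add: transpose_def vec_eq_iff)

lemma transpose_diff: "transpose (A - B) = transpose A - transpose (B :: 'a::ring_1^'n^'m)"
  by (simp add: transpose_def vec_eq_iff)

lemma matrix_add_rdistrib: "(B + C) ** A = B ** A + C ** (A :: 'a::semiring_1^'n^'m)"
  by (simp add: matrix_matrix_mult_def vec_eq_iff algebra_simps sum.distrib)

lemma matrix_diff_ldistrib: "A ** (B - C) = A ** B - A ** (C :: 'a::ring_1^'n^'m)"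
  by (simp add: matrix_matrix_mult_def vec_eq_iff algebra_simps sum_subtractf)

lemma matrix_diff_rdistrib: "(B - C) ** A = B ** A - C ** (A :: 'a::ring_1^'n^'m)"
  by (simp add: matrix_matrix_mult_def vec_eq_iff algebra_simps sum_subtractf)

lemma trace_scaleR: "trace (c *\<^sub>R A) = c * trace (A :: real^'n^'n)"
  by (simp add: trace_def sum_distrib_left)

lemma inner_transpose_mult_vec: "x \<bullet> (transpose A *v y) = (A *v x) \<bullet> (y :: real^'n)"
  for A :: "real^'n^'n"
  by (simp add: dot_lmul_matrix[symmetric] inner_commute)

lemma inner_gram_mult_vec: "x \<bullet> ((transpose A ** A) *v y) = (A *v x) \<bullet> (A *v y)"
  for A :: "real^'n^'n"
  by (metis matrix_vector_mul_assoc inner_transpose_mult_vec)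

lemma eigenvector_diff_mat_1:
  fixes M :: "real^'n^'n"
  assumes "M *v v = c *\<^sub>R v"
  shows "(M - mat 1) *v v = (c - 1) *\<^sub>R v"
  using assms by (simp add: matrix_vector_mult_diff_rdistrib scaleR_diff_left)

definition orthonormal3 :: "real^3 \<Rightarrow> real^3 \<Rightarrow> real^3 \<Rightarrow> bool" where
  "orthonormal3 v1 v2 v3 \<longleftrightarrow> v1 \<bullet> v1 = 1 \<and> v2 \<bullet> v2 = 1 \<and> v3 \<bullet> v3 = 1 \<and>
     v1 \<bullet> v2 = 0 \<and> v1 \<bullet> v3 = 0 \<and> v2 \<bullet> v3 = 0"

lemma orthonormal3_inner:
  assumes "orthonormal3 v1 v2 v3"
  shows "v1 \<bullet> v1 = 1" "v2 \<bullet> v2 = 1" "v3 \<bullet> v3 = 1" "v1 \<bullet> v2 = 0" "v1 \<bullet> v3 = 0" "v2 \<bullet> v3 = 0"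
    "v2 \<bullet> v1 = 0" "v3 \<bullet> v1 = 0" "v3 \<bullet> v2 = 0"
  using assms unfolding orthonormal3_def by (auto simp: inner_commute)

lemma orthonormal3_cross:
  assumes "norm v1 = 1" "norm v3 = 1" "v1 \<bullet> v3 = 0"
  shows "orthonormal3 v1 (cross3 v3 v1) v3"
proof -
  have "(norm (cross3 v3 v1))\<^sup>2 = 1"
    using norm_cross_dot[of v3 v1] assms by (simp add: inner_commute)
  then show ?thesis
    using assms unfolding orthonormal3_def norm_eq_1
    by (simp add: power2_norm_eq_inner dot_cross_self)
qed

lemma orthogonal_matrix_rows:
  assumes "orthonormal3 v1 v2 v3"
  shows "orthogonal_matrix (vector [v1, v2, v3] :: real^3^3)"
proof -
  have "vector [v1, v2, v3] ** transpose (vector [v1, v2, v3]) = (mat 1 :: real^3^3)"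
    using assms unfolding orthonormal3_def
    by (simp add: matrix_matrix_mult_def transpose_def mat_def vec_eq_iff forall_3 sum_3
        inner_vec_def mult.commute)
  then show ?thesis
    by (simp add: orthogonal_matrix_def matrix_left_right_inverse)
qed

lemma orthonormal3_expand:
  assumes "orthonormal3 v1 v2 v3"
  shows "w = (w \<bullet> v1) *\<^sub>R v1 + (w \<bullet> v2) *\<^sub>R v2 + (w \<bullet> v3) *\<^sub>R v3"
proof -
  let ?P = "vector [v1, v2, v3] :: real^3^3"
  have "w = (transpose ?P ** ?P) *v w"
    using orthogonal_matrix_rows[OF assms] by (simp add: orthogonal_matrix_def)
  also have "\<dots> = (w \<bullet> v1) *\<^sub>R v1 + (w \<bullet> v2) *\<^sub>R v2 + (w \<bullet> v3) *\<^sub>R v3"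
    by (simp add: matrix_matrix_mult_def matrix_vector_mult_def transpose_def vec_eq_iff forall_3
        sum_3 inner_vec_def algebra_simps)
  finally show ?thesis .
qed

lemma orthonormal3_inner_expand:
  assumes "orthonormal3 v1 v2 v3"
  shows "x \<bullet> y = (x \<bullet> v1) * (y \<bullet> v1) + (x \<bullet> v2) * (y \<bullet> v2) + (x \<bullet> v3) * (y \<bullet> v3)"
proof -
  have "x \<bullet> y = x \<bullet> ((y \<bullet> v1) *\<^sub>R v1 + (y \<bullet> v2) *\<^sub>R v2 + (y \<bullet> v3) *\<^sub>R v3)"
    using orthonormal3_expand[OF assms, of y] by simp
  then show ?thesis by (simp add: inner_add_right mult.commute)
qed

lemma orthonormal3_vector_eq:
  assumes o: "orthonormal3 v1 v2 v3" and "x \<bullet> v1 = y \<bullet> v1" "x \<bullet> v2 = y \<bullet> v2" "x \<bullet> v3 = y \<bullet> v3"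
  shows "x = y"
  by (subst orthonormal3_expand[OF o, of x])
    (simp add: assms(2-4) orthonormal3_expand[OF o, symmetric])

lemma orthonormal3_matrix_eq:
  assumes o: "orthonormal3 v1 v2 v3"
    and eq: "\<And>x y. x \<in> {v1, v2, v3} \<Longrightarrow> y \<in> {v1, v2, v3} \<Longrightarrow> x \<bullet> (M *v y) = x \<bullet> (N *v y)"
  shows "M = N"
proof -
  have on_frame: "M *v y = N *v y" if "y \<in> {v1, v2, v3}" for y
    using eq[OF _ that] by (intro orthonormal3_vector_eq[OF o]) (auto simp: inner_commute)
  have "M *v w = N *v w" for w
  proof -
    have "M *v w = M *v ((w \<bullet> v1) *\<^sub>R v1 + (w \<bullet> v2) *\<^sub>R v2 + (w \<bullet> v3) *\<^sub>R v3)"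
      by (subst orthonormal3_expand[OF o, of w]) (rule refl)
    also have "\<dots> = N *v ((w \<bullet> v1) *\<^sub>R v1 + (w \<bullet> v2) *\<^sub>R v2 + (w \<bullet> v3) *\<^sub>R v3)"
      by (simp add: matrix_vector_right_distrib matrix_vector_mult_scaleR on_frame)
    also have "\<dots> = N *v w"
      by (simp add: orthonormal3_expand[OF o, symmetric])
    finally show ?thesis .
  qed
  then show ?thesis by (simp add: matrix_eq)
qed

lemma orthonormal3_eigen_det_trace:
  assumes o: "orthonormal3 v1 v2 v3"
    and "M *v v1 = l1 *\<^sub>R v1" "M *v v2 = l2 *\<^sub>R v2" "M *v v3 = l3 *\<^sub>R v3"
  shows "det M = l1 * l2 * l3" "trace M = l1 + l2 + l3"
proof -
  let ?P = "vector [v1, v2, v3] :: real^3^3"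
  define D :: "real^3^3"
    where "D = (\<chi> i j. if i = j then (vector [l1, l2, l3] :: real^3) $ i else 0)"
  have P: "transpose ?P ** ?P = mat 1" "?P ** transpose ?P = mat 1"
    using orthogonal_matrix_rows[OF o] by (auto simp: orthogonal_matrix_def)
  have "M$i$1 * v$1 + M$i$2 * v$2 + M$i$3 * v$3 = v$i * l"
    if "M *v v = l *\<^sub>R v" for v l i
    using that by (simp add: vec_eq_iff matrix_vector_mult_def sum_3 mult.commute)
  note components = this[OF assms(2)] this[OF assms(3)] this[OF assms(4)]
  have "M ** transpose ?P = transpose ?P ** D"
    by (simp add: D_def vec_eq_iff forall_3 matrix_matrix_mult_def transpose_def sum_3 components)
  then have "?P ** M ** transpose ?P = (?P ** transpose ?P) ** D"
    by (metis matrix_mul_assoc)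
  then have similar: "?P ** M ** transpose ?P = D"
    by (simp add: P(2))
  have "det M = det (?P ** M ** transpose ?P)"
    using det_orthogonal_matrix[OF orthogonal_matrix_rows[OF o]] by (auto simp: det_mul)
  then show "det M = l1 * l2 * l3"
    by (simp add: similar D_def det_3)
  have "trace M = trace (?P ** M ** transpose ?P)"
    using trace_mul_sym[of "?P ** M" "transpose ?P"] by (simp add: matrix_mul_assoc P(1))
  then show "trace M = l1 + l2 + l3"
    by (simp add: similar D_def trace_def sum_3)
qed

lemma orthonormal3_symmetric_eigenvector:
  assumes o: "orthonormal3 v1 v2 v3" and C_sym: "transpose C = C"
    and "C *v v1 = c1 *\<^sub>R v1" "C *v v3 = c3 *\<^sub>R v3"
  shows "C *v v2 = (v2 \<bullet> (C *v v2)) *\<^sub>R v2"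
proof (rule orthonormal3_vector_eq[OF o])
  have "(C *v v2) \<bullet> v = v2 \<bullet> (C *v v)" for v
    using inner_transpose_mult_vec[of v2 C v] by (simp only: C_sym)
  then show "(C *v v2) \<bullet> v1 = ((v2 \<bullet> (C *v v2)) *\<^sub>R v2) \<bullet> v1"
    "(C *v v2) \<bullet> v2 = ((v2 \<bullet> (C *v v2)) *\<^sub>R v2) \<bullet> v2"
    "(C *v v2) \<bullet> v3 = ((v2 \<bullet> (C *v v2)) *\<^sub>R v2) \<bullet> v3"
    using assms(3,4) by (simp_all add: orthonormal3_inner[OF o])
qed

lemma outer_mult_vec: "outer a n *v x = (n \<bullet> x) *\<^sub>R a"
  by (simp add: outer_def vec_eq_iff matrix_vector_mult_def inner_vec_def sum_3 algebra_simps)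

lemma inner_outer_mult_vec: "x \<bullet> (outer a n *v y) = (x \<bullet> a) * (n \<bullet> y)"
  by (simp add: outer_mult_vec)

lemma transpose_outer: "transpose (outer a n) = outer n a"
  by (simp add: outer_def transpose_def vec_eq_iff)

lemma trace_outer: "trace (outer a n) = a \<bullet> n"
  by (simp add: trace_def outer_def inner_vec_def sum_3)

lemma outer_add_left: "outer (x + y) n = outer x n + outer y n"
  and outer_add_right: "outer n (x + y) = outer n x + outer n y"
  and outer_scaleR_left: "outer (c *\<^sub>R x) n = c *\<^sub>R outer x n"
  and outer_scaleR_right: "outer n (c *\<^sub>R x) = c *\<^sub>R outer n x"
  by (simp_all add: outer_def vec_eq_iff algebra_simps)

lemma matrix_mul_outer: "A ** outer a n = outer (A *v a) n"
  by (simp add: outer_def matrix_matrix_mult_def matrix_vector_mult_def vec_eq_iff sum_3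
      algebra_simps)

lemma outer_matrix_mul: "outer n a ** A = outer n (transpose A *v a)"
  by (simp add: outer_def matrix_matrix_mult_def matrix_vector_mult_def transpose_def vec_eq_iff
      sum_3 algebra_simps)

(* The cyclic indices i + 1, i + 2 in cof reach the numerals 4 and 5 of type 3. *)
lemma numeral_3_wrap: "(4::3) = 1" "(5::3) = 2"
  by simp_all

lemma det_add_outer: "det (A + outer u v) = det A + u \<bullet> (cof A *v v)"
  by (simp add: numeral_3_wrap det_3 outer_def cof_def inner_vec_def sum_3 matrix_vector_mult_def
      algebra_simps)

lemma det_add_outer_sym:
  "det (A + outer u n + outer n u) =
     det A + u \<bullet> (cof A *v n) + n \<bullet> (cof A *v u) - cross3 u n \<bullet> (A *v cross3 u n)"
  by (simp add: numeral_3_wrap det_3 outer_def cof_def inner_vec_def sum_3 matrix_vector_mult_def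
      cross3_def vector_def algebra_simps)

lemma det_mat_1_add_outer: "det (mat 1 + outer b m) = 1 + b \<bullet> m"
proof -
  have "cof (mat 1) = mat 1"
    by (simp add: numeral_3_wrap cof_def mat_def vec_eq_iff forall_3)
  then show ?thesis by (simp add: det_add_outer)
qed

lemma inner_cof_commute:
  assumes "transpose A = A"
  shows "x \<bullet> (cof A *v y) = y \<bullet> (cof A *v x)"
proof -
  have "A $ i $ j = A $ j $ i" for i j
    using arg_cong[OF assms, of "\<lambda>M. M $ j $ i"] by (simp add: transpose_def)
  then show ?thesis
    by (simp add: numeral_3_wrap cof_def inner_vec_def sum_3 matrix_vector_mult_def algebra_simps)
qed

lemma inner_mat_1_add_outer:
  "((mat 1 + outer b m) *v x) \<bullet> ((mat 1 + outer b m) *v y) =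
     x \<bullet> y + (m \<bullet> y) * (x \<bullet> b) + (m \<bullet> x) * (b \<bullet> y) + (m \<bullet> x) * (m \<bullet> y) * (b \<bullet> b)"
  by (simp add: matrix_vector_mult_add_rdistrib outer_mult_vec inner_add_left inner_add_right
      algebra_simps inner_commute)

lemma gram_add_outer:
  assumes "transpose U = U"
  shows "(U + g *\<^sub>R outer n a) ** (U + g *\<^sub>R outer a n) =
     U ** U + g *\<^sub>R (outer (U *v a) n + outer n (U *v a)) + (g\<^sup>2 * (a \<bullet> a)) *\<^sub>R outer n n"
  by (simp only: matrix_add_ldistrib matrix_add_rdistrib matrix_scalar_ac
      scalar_matrix_assoc[symmetric])
    (simp add: matrix_mul_outer outer_matrix_mul outer_mult_vec outer_scaleR_left assms
      power2_eq_square scaleR_add_right algebra_simps)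

(* C_g - I = A + u \<otimes> n + n \<otimes> u with u = g U a + g\<^sup>2 |a|\<^sup>2/2 n, and det A = 0 together with
   the hypothesis cof kills every term of det (C_g - I) that is not of degree 2 in g. *)
lemma det_gram_add_outer_minus_one:
  fixes U :: "real^3^3"
  assumes U_sym: "transpose U = U" and singular: "det (U ** U - mat 1) = 0"
    and cof: "a \<bullet> ((U ** cof (U ** U - mat 1)) *v n) = 0"
  shows "det ((U + g *\<^sub>R outer n a) ** (U + g *\<^sub>R outer a n) - mat 1) =
    g\<^sup>2 * det ((U + outer n a) ** (U + outer a n) - mat 1)"
proof -
  define A where "A = U ** U - mat 1"
  define w where "w = U *v a"
  define K where "K = (a \<bullet> a) * (n \<bullet> (cof A *v n)) - cross3 w n \<bullet> (A *v cross3 w n)"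
  have "transpose A = A"
    by (simp add: A_def transpose_diff matrix_transpose_mul U_sym)
  have w_cof: "w \<bullet> (cof A *v n) = 0"
    using cof by (metis A_def w_def inner_transpose_mult_vec matrix_vector_mul_assoc U_sym)
  have "det ((U + h *\<^sub>R outer n a) ** (U + h *\<^sub>R outer a n) - mat 1) = h\<^sup>2 * K" for h
  proof -
    define u where "u = h *\<^sub>R w + (h\<^sup>2 * (a \<bullet> a) / 2) *\<^sub>R n"
    have "(U + h *\<^sub>R outer n a) ** (U + h *\<^sub>R outer a n) - mat 1 = A + outer u n + outer n u"
      by (simp add: gram_add_outer[OF U_sym] u_def A_def w_def outer_add_left outer_add_right
          outer_scaleR_left outer_scaleR_right algebra_simps flip: scaleR_add_left)
    then have "det ((U + h *\<^sub>R outer n a) ** (U + h *\<^sub>R outer a n) - mat 1) =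
        det A + u \<bullet> (cof A *v n) + n \<bullet> (cof A *v u) - cross3 u n \<bullet> (A *v cross3 u n)"
      by (simp add: det_add_outer_sym)
    also have "n \<bullet> (cof A *v u) = u \<bullet> (cof A *v n)"
      by (rule inner_cof_commute[OF \<open>transpose A = A\<close>])
    also have "u \<bullet> (cof A *v n) = (h\<^sup>2 * (a \<bullet> a) / 2) * (n \<bullet> (cof A *v n))"
      by (simp add: u_def inner_add_left w_cof)
    also have "cross3 u n = h *\<^sub>R cross3 w n"
      by (simp add: u_def cross_add_left cross_mult_left)
    finally show ?thesis
      using singular by (simp add: K_def A_def algebra_simps power2_eq_square)
  qed
  from this[of g] this[of 1] show ?thesis by simp
qed

lemma trace_gram_add_outer:
  assumes "transpose U = U"
  shows "trace ((U + g *\<^sub>R outer n a) ** (U + g *\<^sub>R outer a n)) =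
    trace (U ** U) + 2 * g * ((U *v a) \<bullet> n) + g\<^sup>2 * ((a \<bullet> a) * (n \<bullet> n))"
  by (simp add: gram_add_outer[OF assms] trace_add trace_scaleR trace_outer inner_commute
      algebra_simps)

lemma middle_eigenvalue_one_det:
  assumes U: "pos_def_sym U" and mid: "middle_eigenvalue U 1"
  shows "det U > 0" "det (U ** U - mat 1) = 0"
proof -
  obtain v1 v2 v3 l1 l3 where norms: "norm v1 = 1" "norm v2 = 1" "norm v3 = 1"
    and orth: "v1 \<bullet> v2 = 0" "v1 \<bullet> v3 = 0" "v2 \<bullet> v3 = 0"
    and eigen: "U *v v1 = l1 *\<^sub>R v1" "U *v v2 = 1 *\<^sub>R v2" "U *v v3 = l3 *\<^sub>R v3"
    using mid unfolding middle_eigenvalue_def by blast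
  have o: "orthonormal3 v1 v2 v3"
    using norms orth by (simp add: orthonormal3_def norm_eq_1)
  have "v1 \<bullet> (U *v v1) > 0" "v3 \<bullet> (U *v v3) > 0"
    using U norms unfolding pos_def_sym_def by (metis norm_zero zero_neq_one)+
  then have "l1 > 0" "l3 > 0"
    using eigen norms by (simp_all add: norm_eq_1)
  then show "det U > 0"
    using orthonormal3_eigen_det_trace(1)[OF o eigen] by simp
  have "(U ** U - mat 1) *v v = (l\<^sup>2 - 1) *\<^sub>R v" if "U *v v = l *\<^sub>R v" for v l
    using that by (intro eigenvector_diff_mat_1)
      (simp add: matrix_vector_mul_assoc[symmetric] power2_eq_square matrix_vector_mult_scaleR)
  from orthonormal3_eigen_det_trace(1)[OF o this[OF eigen(1)] this[OF eigen(2)] this[OF eigen(3)]]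
  show "det (U ** U - mat 1) = 0" by simp
qed

lemma eigenvalue_triple_middle_one:
  fixes x mu z :: real
  assumes "x \<le> mu" "mu \<le> z" "(x - 1) * (mu - 1) * (z - 1) = 0" "x + mu + z - x * mu * z - 2 > 0"
  shows "mu = 1 \<and> x < 1 \<and> 1 < z"
proof -
  have "x \<noteq> 1"
  proof
    assume "x = 1"
    then have "x + mu + z - x * mu * z - 2 = - ((mu - 1) * (z - 1))" by (simp add: algebra_simps)
    moreover have "0 \<le> (mu - 1) * (z - 1)" using \<open>x = 1\<close> assms(1,2) by simp
    ultimately show False using assms(4) by linarith
  qed
  moreover have "z \<noteq> 1"
  proof
    assume "z = 1"
    then have "x + mu + z - x * mu * z - 2 = - ((1 - x) * (1 - mu))" by (simp add: algebra_simps)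
    moreover have "0 \<le> (1 - x) * (1 - mu)" using \<open>z = 1\<close> assms(1,2) by simp
    ultimately show False using assms(4) by linarith
  qed
  ultimately have "mu = 1" using assms(3) by simp
  then have "0 < (1 - x) * (z - 1)" using assms(4) by (simp add: algebra_simps)
  then show ?thesis using \<open>mu = 1\<close> assms(1,2) by (auto simp: zero_less_mult_iff)
qed

lemma gram_middle_eigenvalue_one:
  fixes C :: "real^3^3"
  assumes C_sym: "transpose C = C" and singular: "det (C - mat 1) = 0"
    and gap: "trace C - det C - 2 > 0"
    and l: "l1 > 0" "l3 > 0" and v: "norm v1 = 1" "norm v3 = 1" "v1 \<bullet> v3 = 0"
    and e1: "C *v v1 = l1\<^sup>2 *\<^sub>R v1" and e3: "C *v v3 = l3\<^sup>2 *\<^sub>R v3"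
    and extremal: "\<forall>mu x. x \<noteq> 0 \<longrightarrow> C *v x = mu *\<^sub>R x \<longrightarrow> l1\<^sup>2 \<le> mu \<and> mu \<le> l3\<^sup>2"
  shows "C *v cross3 v3 v1 = cross3 v3 v1" "l1 < 1" "1 < l3" "middle_eigenvalue C 1"
proof -
  define v2 where "v2 = cross3 v3 v1"
  define mu where "mu = v2 \<bullet> (C *v v2)"
  have o: "orthonormal3 v1 v2 v3"
    unfolding v2_def by (rule orthonormal3_cross[OF v])
  have e2: "C *v v2 = mu *\<^sub>R v2"
    unfolding mu_def by (rule orthonormal3_symmetric_eigenvector[OF o C_sym e1 e3])
  have "v2 \<noteq> 0" using orthonormal3_inner(2)[OF o] by auto
  then have "l1\<^sup>2 \<le> mu" "mu \<le> l3\<^sup>2" using extremal e2 by auto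
  moreover have "(l1\<^sup>2 - 1) * (mu - 1) * (l3\<^sup>2 - 1) = 0"
    using singular orthonormal3_eigen_det_trace(1)[OF o eigenvector_diff_mat_1[OF e1]
        eigenvector_diff_mat_1[OF e2] eigenvector_diff_mat_1[OF e3]]
    by simp
  moreover have "l1\<^sup>2 + mu + l3\<^sup>2 - l1\<^sup>2 * mu * l3\<^sup>2 - 2 > 0"
    using gap orthonormal3_eigen_det_trace[OF o e1 e2 e3] by simp
  ultimately have "mu = 1 \<and> l1\<^sup>2 < 1 \<and> 1 < l3\<^sup>2"
    by (rule eigenvalue_triple_middle_one)
  with e2 l show "C *v cross3 v3 v1 = cross3 v3 v1" "l1 < 1" "1 < l3"
    using power_less_imp_less_base[of 1 2 l3] by (auto simp: v2_def power_less_one_iff abs_less_iff)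
  show "middle_eigenvalue C 1"
    unfolding middle_eigenvalue_def
    using o e1 e2 e3 \<open>mu = 1 \<and> l1\<^sup>2 < 1 \<and> 1 < l3\<^sup>2\<close>
    by (intro exI[of _ v1] exI[of _ v2] exI[of _ v3] exI[of _ "l1\<^sup>2"] exI[of _ "l3\<^sup>2"])
      (auto simp: orthonormal3_def norm_eq_1)
qed

definition half_turn :: "real^3 \<Rightarrow> real^3^3" where
  "half_turn e = - mat 1 + 2 *\<^sub>R outer e e"

lemma half_turn_symmetric: "transpose (half_turn e) = half_turn e"
  by (simp add: half_turn_def transpose_diff transpose_scalar transpose_outer)

lemma half_turn_involution:
  assumes "norm e = 1"
  shows "half_turn e ** half_turn e = mat 1"
proof -
  have "outer e e ** outer e e = outer e e"
    using assms by (simp add: matrix_mul_outer outer_mult_vec norm_eq_1)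
  then show ?thesis
    by (simp add: half_turn_def matrix_diff_ldistrib matrix_diff_rdistrib matrix_scalar_ac
        scalar_matrix_assoc[symmetric]) (simp add: vec_eq_iff)
qed

lemma twin_gram:
  fixes U R :: "real^3^3"
  assumes U_sym: "transpose U = U" and e: "norm e = 1" and R: "R \<in> SO3"
    and twin: "R ** (half_turn e ** U ** half_turn e) = U + outer a n"
  shows "(U + outer n a) ** (U + outer a n) = half_turn e ** (U ** U) ** half_turn e"
proof -
  let ?Q = "half_turn e"
  have "(U + outer n a) ** (U + outer a n) = transpose (U + outer a n) ** (U + outer a n)"
    by (simp add: transpose_add transpose_outer U_sym)
  also have "\<dots> = transpose (?Q ** U ** ?Q) ** (transpose R ** R) ** (?Q ** U ** ?Q)"
    by (simp add: twin[symmetric] matrix_transpose_mul matrix_mul_assoc)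
  also have "\<dots> = ?Q ** U ** (?Q ** ?Q) ** U ** ?Q"
    using R by (simp add: SO3_def orthogonal_matrix matrix_transpose_mul half_turn_symmetric
        U_sym matrix_mul_assoc)
  also have "\<dots> = ?Q ** (U ** U) ** ?Q"
    by (simp add: half_turn_involution[OF e] matrix_mul_assoc)
  finally show ?thesis .
qed

lemma twin_invariants:
  fixes U R :: "real^3^3"
  assumes U_sym: "transpose U = U" and e: "norm e = 1" and R: "R \<in> SO3"
    and twin: "R ** (half_turn e ** U ** half_turn e) = U + outer a n"
  shows "det (U + outer a n) = det U"
    and "det ((U + outer n a) ** (U + outer a n) - mat 1) = det (U ** U - mat 1)"
    and "trace ((U + outer n a) ** (U + outer a n)) = trace (U ** U)"
proof -
  let ?Q = "half_turn e"
  have QQ: "?Q ** ?Q = mat 1" by (rule half_turn_involution[OF e])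
  then have dQ: "det ?Q * det ?Q = 1" by (metis det_I det_mul)
  show "det (U + outer a n) = det U"
    using R dQ by (simp add: twin[symmetric] SO3_def det_mul)
  have "?Q ** (U ** U) ** ?Q - mat 1 = ?Q ** (U ** U - mat 1) ** ?Q"
    by (simp add: matrix_diff_ldistrib matrix_diff_rdistrib QQ)
  then show "det ((U + outer n a) ** (U + outer a n) - mat 1) = det (U ** U - mat 1)"
    using dQ by (simp add: twin_gram[OF assms] det_mul)
  have "trace (?Q ** (U ** U) ** ?Q) = trace ((U ** U) ** (?Q ** ?Q))"
    by (metis matrix_mul_assoc trace_mul_sym)
  then show "trace ((U + outer n a) ** (U + outer a n)) = trace (U ** U)"
    by (simp add: twin_gram[OF assms] QQ)
qed

lemma twin_interpolation:
  fixes U R :: "real^3^3"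
  assumes U: "pos_def_sym U" and e: "norm e = 1" and R: "R \<in> SO3"
    and twin: "R ** (half_turn e ** U ** half_turn e) = U + outer a n"
    and CC1: "middle_eigenvalue U 1"
    and CC2: "a \<bullet> ((U ** cof (U ** U - mat 1)) *v n) = 0"
  shows "det ((U + f *\<^sub>R outer n a) ** (U + f *\<^sub>R outer a n) - mat 1) = 0"
    and "det (U + f *\<^sub>R outer a n) = det U"
    and "trace ((U + f *\<^sub>R outer n a) ** (U + f *\<^sub>R outer a n))
           - det ((U + f *\<^sub>R outer n a) ** (U + f *\<^sub>R outer a n)) - 2
         = trace (U ** U) - det (U ** U) - (norm a)\<^sup>2 * (norm n)\<^sup>2 / 4 - 2
           + (norm a)\<^sup>2 * (norm n)\<^sup>2 * (f - 1/2)\<^sup>2"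
proof -
  have U_sym: "transpose U = U" using U by (simp add: pos_def_sym_def)
  note singular = middle_eigenvalue_one_det(2)[OF U CC1]
  note inv = twin_invariants[OF U_sym e R twin]
  show "det ((U + f *\<^sub>R outer n a) ** (U + f *\<^sub>R outer a n) - mat 1) = 0"
    using det_gram_add_outer_minus_one[OF U_sym singular CC2] inv(2) singular by simp
  have det_F: "det (U + g *\<^sub>R outer a n) = det U + g * (a \<bullet> (cof U *v n))" for g
    using det_add_outer[of U "g *\<^sub>R a" n] by (simp add: outer_scaleR_left)
  with inv(1) have "a \<bullet> (cof U *v n) = 0"
    using det_F[of 1] by simp
  with det_F show "det (U + f *\<^sub>R outer a n) = det U"
    by simp
  have "U + f *\<^sub>R outer n a = transpose (U + f *\<^sub>R outer a n)"
    by (simp add: transpose_add transpose_outer transpose_scalar U_sym)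
  with \<open>det (U + f *\<^sub>R outer a n) = det U\<close>
  have "det ((U + f *\<^sub>R outer n a) ** (U + f *\<^sub>R outer a n)) = det (U ** U)"
    by (simp add: det_mul)
  moreover have "2 * ((U *v a) \<bullet> n) = - ((a \<bullet> a) * (n \<bullet> n))"
    using trace_gram_add_outer[OF U_sym, of 1] inv(3) by simp
  ultimately show "trace ((U + f *\<^sub>R outer n a) ** (U + f *\<^sub>R outer a n))
           - det ((U + f *\<^sub>R outer n a) ** (U + f *\<^sub>R outer a n)) - 2
         = trace (U ** U) - det (U ** U) - (norm a)\<^sup>2 * (norm n)\<^sup>2 / 4 - 2
           + (norm a)\<^sup>2 * (norm n)\<^sup>2 * (f - 1/2)\<^sup>2"
    by (simp add: trace_gram_add_outer[OF U_sym] dot_square_norm algebra_simps power2_eq_square)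
qed

(* E_ij is the (v_i, v_j) entry of (I + m \<otimes> b)(I + b \<otimes> m) = diag(c_1, c_2, c_3) in an
   orthonormal eigenframe, where b_i = b \<bullet> v_i, m_i = m \<bullet> v_i and S = |b|\<^sup>2.  With
   g = b + S/2 m the system becomes bilinear: 2 m_i g_i = c_i - 1 and m_i g_j + m_j g_i = 0. *)
lemma rank_one_frame_middle:
  fixes l1 b1 b2 m1 m2 S :: real
  assumes "l1\<^sup>2 \<noteq> 1"
    and E11: "1 + 2 * m1 * b1 + S * m1\<^sup>2 = l1\<^sup>2"
    and E22: "1 + 2 * m2 * b2 + S * m2\<^sup>2 = 1"
    and E12: "m1 * b2 + m2 * b1 + S * m1 * m2 = 0"
  shows "b2 = 0 \<and> m2 = 0"
proof -
  define g1 g2 where "g1 = b1 + S/2 * m1" and "g2 = b2 + S/2 * m2"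
  have "2 * m1 * g1 = l1\<^sup>2 - 1"
    using E11 by (simp add: g1_def algebra_simps power2_eq_square)
  then have "m1 \<noteq> 0" "g1 \<noteq> 0"
    using assms(1) by auto
  moreover have "m2 * g2 = 0"
    using E22 by (simp add: g2_def algebra_simps power2_eq_square)
  moreover have "m1 * g2 + m2 * g1 = 0"
    using E12 by (simp add: g1_def g2_def algebra_simps)
  ultimately have "m2 = 0 \<and> g2 = 0"
    by (cases "m2 = 0") auto
  then show ?thesis by (auto simp: g2_def)
qed

lemma rank_one_frame_ratio:
  fixes p q b1 b3 m1 m3 S :: real
  assumes p: "p > 0" and q: "q > 0"
    and E11: "1 + 2 * m1 * b1 + S * m1\<^sup>2 = 1 - p\<^sup>2"
    and E33: "1 + 2 * m3 * b3 + S * m3\<^sup>2 = 1 + q\<^sup>2"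
    and E13: "m1 * b3 + m3 * b1 + S * m1 * m3 = 0"
  shows "m1 \<noteq> 0" "m3 \<noteq> 0" "m1\<^sup>2 * q\<^sup>2 = m3\<^sup>2 * p\<^sup>2"
proof -
  define g1 g3 where "g1 = b1 + S/2 * m1" and "g3 = b3 + S/2 * m3"
  have e11: "2 * m1 * g1 = - p\<^sup>2" and e33: "2 * m3 * g3 = q\<^sup>2"
    using E11 E33 by (simp_all add: g1_def g3_def algebra_simps power2_eq_square)
  have e13: "m1 * g3 + m3 * g1 = 0"
    using E13 by (simp add: g1_def g3_def algebra_simps)
  show "m1 \<noteq> 0" "m3 \<noteq> 0"
    using e11 e33 p q by auto
  have "m1\<^sup>2 * (2 * m3 * g3) + m3\<^sup>2 * (2 * m1 * g1) = 2 * m1 * m3 * (m1 * g3 + m3 * g1)"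
    by (simp add: algebra_simps power2_eq_square)
  then show "m1\<^sup>2 * q\<^sup>2 = m3\<^sup>2 * p\<^sup>2"
    by (simp add: e11 e33 e13)
qed

lemma rank_one_frame_products:
  fixes p q b1 b3 m1 m3 S :: real
  assumes p: "p > 0" and q: "q > 0"
    and E11: "1 + 2 * m1 * b1 + S * m1\<^sup>2 = 1 - p\<^sup>2"
    and E33: "1 + 2 * m3 * b3 + S * m3\<^sup>2 = 1 + q\<^sup>2"
    and E13: "m1 * b3 + m3 * b1 + S * m1 * m3 = 0"
  defines "t \<equiv> S * m1\<^sup>2 / (2 * p\<^sup>2)"
  obtains k where "k\<^sup>2 = 1"
    and "b1 * m1 = - p\<^sup>2 * (1/2 + t)" "b3 * m3 = q\<^sup>2 * (1/2 - t)"
    and "b1 * m3 = k * p * q * (1/2 + t)" "b3 * m1 = - k * p * q * (1/2 - t)"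
proof -
  note ratio = rank_one_frame_ratio[OF p q E11 E33 E13]
  define k where "k = - (m3 * p) / (m1 * q)"
  have "k\<^sup>2 = 1"
    using ratio p q by (simp add: k_def field_simps power2_eq_square)
  have m3: "m3 = - k * m1 * q / p"
    using ratio(1) p q by (simp add: k_def field_simps)
  have pt: "p\<^sup>2 * t = S/2 * m1\<^sup>2"
    using p by (simp add: t_def)
  have "b1 * m1 = - p\<^sup>2 / 2 - S/2 * m1\<^sup>2"
    using E11 by (simp add: algebra_simps power2_eq_square)
  then have b1m1: "b1 * m1 = - p\<^sup>2 * (1/2 + t)"
    using pt by (simp add: algebra_simps)
  have "m3\<^sup>2 = m1\<^sup>2 * q\<^sup>2 / p\<^sup>2"
    using ratio(3) p by (simp add: field_simps)
  then have "S/2 * m3\<^sup>2 = q\<^sup>2 * t"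
    using pt p by (simp add: t_def field_simps)
  moreover have "b3 * m3 = q\<^sup>2 / 2 - S/2 * m3\<^sup>2"
    using E33 by (simp add: algebra_simps power2_eq_square)
  ultimately have b3m3: "b3 * m3 = q\<^sup>2 * (1/2 - t)"
    by (simp add: algebra_simps)
  show thesis
  proof (rule that[OF \<open>k\<^sup>2 = 1\<close> b1m1 b3m3])
    have "b1 * m3 = - (k * q / p) * (b1 * m1)"
      using p by (simp add: m3 field_simps)
    also have "\<dots> = k * p * q * (1/2 + t)"
      using p by (simp add: b1m1 field_simps power2_eq_square)
    finally show "b1 * m3 = k * p * q * (1/2 + t)" .
    have "m1 = - k * m3 * p / q"
      using p q \<open>k\<^sup>2 = 1\<close> by (simp add: m3 field_simps power2_eq_square)
    then have "b3 * m1 = - (k * p / q) * (b3 * m3)"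
      using q by (simp add: field_simps)
    also have "\<dots> = - k * p * q * (1/2 - t)"
      using q by (simp add: b3m3 field_simps power2_eq_square)
    finally show "b3 * m1 = - k * p * q * (1/2 - t)" .
  qed
qed

(* The constraint S = b1\<^sup>2 + b3\<^sup>2 gives a quadratic for t; its other root would make
   det (I + b \<otimes> m) = 1 + b1 m1 + b3 m3 equal to - l1 l3 < 0. *)
lemma rank_one_frame_scale:
  fixes l1 l3 p q t b1 b3 m1 m3 S :: real
  assumes l: "0 < l1" "l1 < l3"
    and p: "p > 0" "p\<^sup>2 = 1 - l1\<^sup>2" and q: "q\<^sup>2 = l3\<^sup>2 - 1"
    and S: "S = b1\<^sup>2 + b3\<^sup>2" and t: "S * m1\<^sup>2 = 2 * p\<^sup>2 * t"
    and b1m1: "b1 * m1 = - p\<^sup>2 * (1/2 + t)" and b3m3: "b3 * m3 = q\<^sup>2 * (1/2 - t)"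
    and b3m1: "b3 * m1 = - k * p * q * (1/2 - t)" and k: "k\<^sup>2 = 1"
    and pos: "1 + b1 * m1 + b3 * m3 > 0"
  shows "t = (l3 - l1) / (2 * (l3 + l1))"
proof -
  have "2 * p\<^sup>2 * t = (b1 * m1)\<^sup>2 + (b3 * m1)\<^sup>2"
    using S t by (simp add: algebra_simps power2_eq_square)
  also have "(b3 * m1)\<^sup>2 = p\<^sup>2 * q\<^sup>2 * (1/2 - t)\<^sup>2"
    using k by (simp add: b3m1 power_mult_distrib)
  also have "(b1 * m1)\<^sup>2 + p\<^sup>2 * q\<^sup>2 * (1/2 - t)\<^sup>2
      = p\<^sup>2 * (p\<^sup>2 * (1/2 + t)\<^sup>2 + q\<^sup>2 * (1/2 - t)\<^sup>2)"
    by (simp add: b1m1 algebra_simps power2_eq_square)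
  finally have "2 * t = p\<^sup>2 * (1/2 + t)\<^sup>2 + q\<^sup>2 * (1/2 - t)\<^sup>2"
    using p(1) by simp
  then have "4 * (l3\<^sup>2 - l1\<^sup>2) * t\<^sup>2 - 4 * (l1\<^sup>2 + l3\<^sup>2) * t + (l3\<^sup>2 - l1\<^sup>2) = 0"
    unfolding p(2) q by (simp add: field_simps power2_eq_square)
  then have roots: "(t - (l3 + l1) / (2 * (l3 - l1))) * (t - (l3 - l1) / (2 * (l3 + l1))) = 0"
    using l by (simp add: field_simps power2_eq_square)
  have det_pos: "(l1\<^sup>2 + l3\<^sup>2) / 2 - t * (l3\<^sup>2 - l1\<^sup>2) > 0"
    using pos unfolding b1m1 b3m3 p(2) q by (simp add: algebra_simps add_divide_distrib)
  have "t \<noteq> (l3 + l1) / (2 * (l3 - l1))"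
  proof
    assume "t = (l3 + l1) / (2 * (l3 - l1))"
    then have "(l1\<^sup>2 + l3\<^sup>2) / 2 - t * (l3\<^sup>2 - l1\<^sup>2) = - l1 * l3"
      using l by (simp add: field_simps power2_eq_square)
    moreover have "0 < l1 * l3" using l by simp
    ultimately show False using det_pos by linarith
  qed
  with roots show ?thesis by simp
qed

lemma rank_one_frame_unique:
  fixes l1 l3 p q b1 b2 b3 m1 m2 m3 S :: real
  assumes l: "0 < l1" "l1 < 1" "1 < l3"
    and p: "p > 0" "p\<^sup>2 = 1 - l1\<^sup>2" and q: "q > 0" "q\<^sup>2 = l3\<^sup>2 - 1"
    and S: "S = b1\<^sup>2 + b2\<^sup>2 + b3\<^sup>2"
    and E11: "1 + 2 * m1 * b1 + S * m1\<^sup>2 = l1\<^sup>2"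
    and E22: "1 + 2 * m2 * b2 + S * m2\<^sup>2 = 1"
    and E33: "1 + 2 * m3 * b3 + S * m3\<^sup>2 = l3\<^sup>2"
    and E12: "m1 * b2 + m2 * b1 + S * m1 * m2 = 0"
    and E13: "m1 * b3 + m3 * b1 + S * m1 * m3 = 0"
    and pos: "1 + b1 * m1 + b2 * m2 + b3 * m3 > 0"
  obtains k where "k\<^sup>2 = 1" and "b2 = 0" "m2 = 0"
    and "b1 * m1 = - l3 * p\<^sup>2 / (l3 + l1)" "b1 * m3 = k * p * q * l3 / (l3 + l1)"
    and "b3 * m1 = - k * p * q * l1 / (l3 + l1)" "b3 * m3 = k\<^sup>2 * q\<^sup>2 * l1 / (l3 + l1)"
proof -
  have "l1\<^sup>2 \<noteq> 1"
    using p by auto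
  with E11 E22 E12 have b2: "b2 = 0" and m2: "m2 = 0"
    using rank_one_frame_middle by blast+
  define t where "t = S * m1\<^sup>2 / (2 * p\<^sup>2)"
  obtain k where k: "k\<^sup>2 = 1"
    and products: "b1 * m1 = - p\<^sup>2 * (1/2 + t)" "b3 * m3 = q\<^sup>2 * (1/2 - t)"
      "b1 * m3 = k * p * q * (1/2 + t)" "b3 * m1 = - k * p * q * (1/2 - t)"
    using rank_one_frame_products[OF p(1) q(1), of m1 b1 S m3 b3] E11 E33 E13 p(2) q(2)
    unfolding t_def by auto
  have "S * m1\<^sup>2 = 2 * p\<^sup>2 * t"
    using p(1) by (simp add: t_def)
  moreover have "l1 < l3" using l by simp
  ultimately have "t = (l3 - l1) / (2 * (l3 + l1))"
    using rank_one_frame_scale[of l1 l3 p q S b1 b3 m1 t m3 k] l p q(2) S products k pos b2 m2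
    by simp
  then have "1/2 + t = l3 / (l3 + l1)" "1/2 - t = l1 / (l3 + l1)"
    using l by (simp_all add: field_simps)
  then show thesis
    using that[OF k b2 m2] products k by (simp add: power2_eq_square)
qed

lemma sqrt_eigenvalue_gaps:
  fixes l1 l3 :: real
  assumes "0 < l1" "l1 < 1" "1 < l3"
  shows "sqrt (1 - l1\<^sup>2) > 0" "(sqrt (1 - l1\<^sup>2))\<^sup>2 = 1 - l1\<^sup>2"
    and "sqrt (l3\<^sup>2 - 1) > 0" "(sqrt (l3\<^sup>2 - 1))\<^sup>2 = l3\<^sup>2 - 1"
    and "sqrt (l3\<^sup>2 - l1\<^sup>2) > 0" "(sqrt (l3\<^sup>2 - l1\<^sup>2))\<^sup>2 = l3\<^sup>2 - l1\<^sup>2"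
proof -
  have "l1\<^sup>2 < 1" "1 < l3\<^sup>2"
    using assms by (simp_all add: power_less_one_iff abs_less_iff one_less_power)
  then show "sqrt (1 - l1\<^sup>2) > 0" "(sqrt (1 - l1\<^sup>2))\<^sup>2 = 1 - l1\<^sup>2"
    "sqrt (l3\<^sup>2 - 1) > 0" "(sqrt (l3\<^sup>2 - 1))\<^sup>2 = l3\<^sup>2 - 1"
    "sqrt (l3\<^sup>2 - l1\<^sup>2) > 0" "(sqrt (l3\<^sup>2 - l1\<^sup>2))\<^sup>2 = l3\<^sup>2 - l1\<^sup>2"
    by simp_all
qed

lemma ball_james_component_products:
  fixes l1 l3 rho k p q r :: real
  assumes r: "r\<^sup>2 = l3\<^sup>2 - l1\<^sup>2" "r > 0" and rho: "rho \<noteq> 0" and l: "0 < l1" "0 < l3"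
  defines "B1 \<equiv> rho / r * (l3 * p)" and "B3 \<equiv> rho / r * (k * l1 * q)"
    and "M1 \<equiv> (1/rho) * (l3 - l1) / r * (- p)" and "M3 \<equiv> (1/rho) * (l3 - l1) / r * (k * q)"
  shows "B1 * M1 = - l3 * p\<^sup>2 / (l3 + l1)" "B1 * M3 = k * p * q * l3 / (l3 + l1)"
    "B3 * M1 = - k * p * q * l1 / (l3 + l1)" "B3 * M3 = k\<^sup>2 * q\<^sup>2 * l1 / (l3 + l1)"
proof -
  have rr: "r * r = (l3 - l1) * (l3 + l1)"
    using r by (simp add: power2_eq_square algebra_simps)
  have "l3 + l1 \<noteq> 0" using l by simp
  then show "B1 * M1 = - l3 * p\<^sup>2 / (l3 + l1)" "B1 * M3 = k * p * q * l3 / (l3 + l1)"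
    "B3 * M1 = - k * p * q * l1 / (l3 + l1)" "B3 * M3 = k\<^sup>2 * q\<^sup>2 * l1 / (l3 + l1)"
    using rho r rr unfolding B1_def B3_def M1_def M3_def
    by (simp_all add: field_simps power2_eq_square, algebra+)
qed

lemma ball_james_component_equations:
  fixes l1 l3 rho k p q r :: real
  assumes p: "p\<^sup>2 = 1 - l1\<^sup>2" and q: "q\<^sup>2 = l3\<^sup>2 - 1" and r: "r\<^sup>2 = l3\<^sup>2 - l1\<^sup>2" "r > 0"
    and rho: "rho \<noteq> 0" and k: "k\<^sup>2 = 1"
  defines "B1 \<equiv> rho / r * (l3 * p)" and "B3 \<equiv> rho / r * (k * l1 * q)"
    and "M1 \<equiv> (1/rho) * (l3 - l1) / r * (- p)" and "M3 \<equiv> (1/rho) * (l3 - l1) / r * (k * q)"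
  shows "B1\<^sup>2 + B3\<^sup>2 = rho\<^sup>2"
    and "1 + 2 * M1 * B1 + rho\<^sup>2 * M1\<^sup>2 = l1\<^sup>2" "1 + 2 * M3 * B3 + rho\<^sup>2 * M3\<^sup>2 = l3\<^sup>2"
    and "M1 * B3 + M3 * B1 + rho\<^sup>2 * M1 * M3 = 0" "B1 * M1 + B3 * M3 = l1 * l3 - 1"
proof -
  show "B1\<^sup>2 + B3\<^sup>2 = rho\<^sup>2"
    using p q k r unfolding B1_def B3_def by (simp add: field_simps power2_eq_square) algebra
  show "1 + 2 * M1 * B1 + rho\<^sup>2 * M1\<^sup>2 = l1\<^sup>2"
    unfolding M1_def B1_def using rho r p by (simp add: field_simps power2_eq_square) algebra
  show "1 + 2 * M3 * B3 + rho\<^sup>2 * M3\<^sup>2 = l3\<^sup>2"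
    unfolding M3_def B3_def using rho r q k by (simp add: field_simps power2_eq_square) algebra
  show "M1 * B3 + M3 * B1 + rho\<^sup>2 * M1 * M3 = 0"
    unfolding M1_def M3_def B1_def B3_def using rho r by (simp add: field_simps power2_eq_square)
  show "B1 * M1 + B3 * M3 = l1 * l3 - 1"
    unfolding M1_def M3_def B1_def B3_def using rho r q k p
    by (simp add: field_simps power2_eq_square) algebra
qed

definition ball_james_b :: "real \<Rightarrow> real \<Rightarrow> real \<Rightarrow> real^3 \<Rightarrow> real^3 \<Rightarrow> real \<Rightarrow> real^3" where
  "ball_james_b rho l1 l3 v1 v3 \<kappa> = (rho / sqrt (l3\<^sup>2 - l1\<^sup>2)) *\<^sub>R
     ((l3 * sqrt (1 - l1\<^sup>2)) *\<^sub>R v1 + (\<kappa> * l1 * sqrt (l3\<^sup>2 - 1)) *\<^sub>R v3)"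

definition ball_james_m :: "real \<Rightarrow> real \<Rightarrow> real \<Rightarrow> real^3 \<Rightarrow> real^3 \<Rightarrow> real \<Rightarrow> real^3" where
  "ball_james_m rho l1 l3 v1 v3 \<kappa> = ((1 / rho) * (l3 - l1) / sqrt (l3\<^sup>2 - l1\<^sup>2)) *\<^sub>R
     ((- sqrt (1 - l1\<^sup>2)) *\<^sub>R v1 + (\<kappa> * sqrt (l3\<^sup>2 - 1)) *\<^sub>R v3)"

lemma ball_james_components:
  assumes "orthonormal3 v1 v2 v3"
  shows "v1 \<bullet> ball_james_b rho l1 l3 v1 v3 \<kappa> = rho / sqrt (l3\<^sup>2 - l1\<^sup>2) * (l3 * sqrt (1 - l1\<^sup>2))"
    and "v2 \<bullet> ball_james_b rho l1 l3 v1 v3 \<kappa> = 0"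
    and "v3 \<bullet> ball_james_b rho l1 l3 v1 v3 \<kappa> =
           rho / sqrt (l3\<^sup>2 - l1\<^sup>2) * (\<kappa> * l1 * sqrt (l3\<^sup>2 - 1))"
    and "ball_james_m rho l1 l3 v1 v3 \<kappa> \<bullet> v1 =
           (1 / rho) * (l3 - l1) / sqrt (l3\<^sup>2 - l1\<^sup>2) * (- sqrt (1 - l1\<^sup>2))"
    and "ball_james_m rho l1 l3 v1 v3 \<kappa> \<bullet> v2 = 0"
    and "ball_james_m rho l1 l3 v1 v3 \<kappa> \<bullet> v3 =
           (1 / rho) * (l3 - l1) / sqrt (l3\<^sup>2 - l1\<^sup>2) * (\<kappa> * sqrt (l3\<^sup>2 - 1))"
  using orthonormal3_inner[OF assms] unfolding ball_james_b_def ball_james_m_def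
  by (simp_all add: inner_add_left inner_add_right inner_diff_left inner_scaleR_left
      inner_scaleR_right)

lemma gram_mat_1_add_outer_eq_iff:
  assumes o: "orthonormal3 v1 v2 v3"
  shows "transpose (mat 1 + outer b m) ** (mat 1 + outer b m) = C \<longleftrightarrow>
    (\<forall>x\<in>{v1, v2, v3}. \<forall>y\<in>{v1, v2, v3}.
       x \<bullet> y + (m \<bullet> y) * (x \<bullet> b) + (m \<bullet> x) * (b \<bullet> y) + (m \<bullet> x) * (m \<bullet> y) * (b \<bullet> b) = x \<bullet> (C *v y))"
  using orthonormal3_matrix_eq[OF o, of "transpose (mat 1 + outer b m) ** (mat 1 + outer b m)" C]
  by (auto simp: inner_gram_mult_vec inner_mat_1_add_outer)

lemma gram_mat_1_add_outer_frame_equations: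
  assumes o: "orthonormal3 v1 v2 v3"
    and gram: "transpose (mat 1 + outer b m) ** (mat 1 + outer b m) = C"
    and "C *v v1 = c1 *\<^sub>R v1" "C *v v2 = c2 *\<^sub>R v2" "C *v v3 = c3 *\<^sub>R v3"
  shows "1 + 2 * (m \<bullet> v1) * (b \<bullet> v1) + (b \<bullet> b) * (m \<bullet> v1)\<^sup>2 = c1"
    and "1 + 2 * (m \<bullet> v2) * (b \<bullet> v2) + (b \<bullet> b) * (m \<bullet> v2)\<^sup>2 = c2"
    and "1 + 2 * (m \<bullet> v3) * (b \<bullet> v3) + (b \<bullet> b) * (m \<bullet> v3)\<^sup>2 = c3"
    and "(m \<bullet> v1) * (b \<bullet> v2) + (m \<bullet> v2) * (b \<bullet> v1) + (b \<bullet> b) * (m \<bullet> v1) * (m \<bullet> v2) = 0"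
    and "(m \<bullet> v1) * (b \<bullet> v3) + (m \<bullet> v3) * (b \<bullet> v1) + (b \<bullet> b) * (m \<bullet> v1) * (m \<bullet> v3) = 0"
  using gram assms(3-5) unfolding gram_mat_1_add_outer_eq_iff[OF o]
  by (auto simp: orthonormal3_inner[OF o] inner_commute algebra_simps power2_eq_square)

lemma matrix_mul_right_cancel_det:
  fixes F :: "real^'n^'n"
  assumes "det F \<noteq> 0" and "R ** F = R' ** F"
  shows "R = R'"
proof -
  obtain F' where "F ** F' = mat 1"
    using assms(1) invertible_det_nz unfolding invertible_def by force
  then show ?thesis
    using arg_cong[OF assms(2), of "\<lambda>X. X ** F'"] by (simp flip: matrix_mul_assoc)
qed

lemma SO3_mult_eq_exists:
  fixes F G :: "real^3^3"
  assumes gram: "transpose G ** G = transpose F ** F" and "det F > 0" "det G > 0"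
  shows "\<exists>R \<in> SO3. R ** F = G"
proof -
  obtain F' where F': "F ** F' = mat 1" "F' ** F = mat 1"
    using \<open>det F > 0\<close> invertible_det_nz unfolding invertible_def by force
  define R where "R = G ** F'"
  have RF: "R ** F = G"
    by (simp add: R_def F' flip: matrix_mul_assoc)
  have "transpose R ** R = transpose F' ** (transpose G ** G) ** F'"
    by (simp add: R_def matrix_transpose_mul matrix_mul_assoc)
  also have "\<dots> = transpose (F ** F') ** (F ** F')"
    by (simp add: gram matrix_transpose_mul matrix_mul_assoc)
  finally have "orthogonal_matrix R"
    by (simp add: F' orthogonal_matrix)
  moreover have "det R * det F = det G"
    using RF by (metis det_mul)
  then have "det R > 0"
    using assms(2,3) by (metis zero_less_mult_pos2)
  ultimately have "R \<in> SO3"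
    using det_orthogonal_matrix[of R] by (auto simp: SO3_def)
  with RF show ?thesis by blast
qed

lemma ball_james_exists:
  fixes F C :: "real^3^3"
  assumes o: "orthonormal3 v1 v2 v3" and CF: "transpose F ** F = C"
    and e1: "C *v v1 = l1\<^sup>2 *\<^sub>R v1" and e2: "C *v v2 = v2" and e3: "C *v v3 = l3\<^sup>2 *\<^sub>R v3"
    and l: "0 < l1" "l1 < 1" "1 < l3" and dF: "det F > 0" and rho: "rho \<noteq> 0" and k: "k\<^sup>2 = 1"
  shows "\<exists>R \<in> SO3. R ** F - mat 1 =
    outer (ball_james_b rho l1 l3 v1 v3 k) (ball_james_m rho l1 l3 v1 v3 k)"
proof -
  define p q r where "p = sqrt (1 - l1\<^sup>2)" and "q = sqrt (l3\<^sup>2 - 1)" and "r = sqrt (l3\<^sup>2 - l1\<^sup>2)"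
  define B1 B3 M1 M3 where "B1 = rho / r * (l3 * p)" and "B3 = rho / r * (k * l1 * q)"
    and "M1 = (1/rho) * (l3 - l1) / r * (- p)" and "M3 = (1/rho) * (l3 - l1) / r * (k * q)"
  define b m where "b = ball_james_b rho l1 l3 v1 v3 k" and "m = ball_james_m rho l1 l3 v1 v3 k"
  have gaps: "p\<^sup>2 = 1 - l1\<^sup>2" "q\<^sup>2 = l3\<^sup>2 - 1" "r\<^sup>2 = l3\<^sup>2 - l1\<^sup>2" "r > 0"
    using sqrt_eigenvalue_gaps[OF l] by (simp_all add: p_def q_def r_def)
  note eqs = ball_james_component_equations[OF gaps rho k, folded B1_def B3_def M1_def M3_def]
  have comps: "v1 \<bullet> b = B1" "v2 \<bullet> b = 0" "v3 \<bullet> b = B3" "m \<bullet> v1 = M1" "m \<bullet> v2 = 0" "m \<bullet> v3 = M3"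
    and comps': "b \<bullet> v1 = B1" "b \<bullet> v2 = 0" "b \<bullet> v3 = B3" "v1 \<bullet> m = M1" "v2 \<bullet> m = 0" "v3 \<bullet> m = M3"
    using ball_james_components[OF o, of rho l1 l3 k]
    by (simp_all add: b_def m_def B1_def B3_def M1_def M3_def p_def q_def r_def inner_commute)
  have bb: "b \<bullet> b = rho\<^sup>2"
    using orthonormal3_inner_expand[OF o, of b b] eqs(1) by (simp add: comps' power2_eq_square)
  have bm: "b \<bullet> m = l1 * l3 - 1"
    using orthonormal3_inner_expand[OF o, of b m] eqs(5) by (simp add: comps comps')
  have "transpose (mat 1 + outer b m) ** (mat 1 + outer b m) = C"
    unfolding gram_mat_1_add_outer_eq_iff[OF o] using eqs(2-4)
    by (auto simp: comps comps' bb orthonormal3_inner[OF o] e1 e2 e3 algebra_simps power2_eq_square)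
  moreover have "det (mat 1 + outer b m) > 0"
    using l by (simp add: det_mat_1_add_outer bm)
  ultimately obtain R where "R \<in> SO3" "R ** F = mat 1 + outer b m"
    using SO3_mult_eq_exists[of "mat 1 + outer b m" F] CF dF by auto
  then show ?thesis
    by (metis add_diff_cancel_left' b_def m_def)
qed

lemma ball_james_unique:
  fixes F C R :: "real^3^3"
  assumes o: "orthonormal3 v1 v2 v3" and CF: "transpose F ** F = C"
    and e1: "C *v v1 = l1\<^sup>2 *\<^sub>R v1" and e2: "C *v v2 = v2" and e3: "C *v v3 = l3\<^sup>2 *\<^sub>R v3"
    and l: "0 < l1" "l1 < 1" "1 < l3" and dF: "det F > 0" and rho: "rho \<noteq> 0"
    and R: "R \<in> SO3" and RF: "R ** F - mat 1 = outer b m"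
  obtains k where "k\<^sup>2 = 1"
    and "outer b m = outer (ball_james_b rho l1 l3 v1 v3 k) (ball_james_m rho l1 l3 v1 v3 k)"
proof -
  define p q r where "p = sqrt (1 - l1\<^sup>2)" and "q = sqrt (l3\<^sup>2 - 1)"
    and "r = sqrt (l3\<^sup>2 - l1\<^sup>2)"
  have gaps: "p > 0" "p\<^sup>2 = 1 - l1\<^sup>2" "q > 0" "q\<^sup>2 = l3\<^sup>2 - 1" "r\<^sup>2 = l3\<^sup>2 - l1\<^sup>2" "r > 0"
    using sqrt_eigenvalue_gaps[OF l] by (simp_all add: p_def q_def r_def)
  have G: "R ** F = mat 1 + outer b m"
    using RF by (simp add: algebra_simps)
  have "transpose (R ** F) ** (R ** F) = C"
    using R CF by (simp add: SO3_def orthogonal_matrix matrix_transpose_mul matrix_mul_assoc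
        flip: matrix_mul_assoc[of "transpose F"])
  then have gram: "transpose (mat 1 + outer b m) ** (mat 1 + outer b m) = C"
    by (simp only: G)
  have "C *v v2 = 1 *\<^sub>R v2"
    using e2 by simp
  note frame = gram_mat_1_add_outer_frame_equations[OF o gram e1 this e3]
  have "b \<bullet> b = (b \<bullet> v1)\<^sup>2 + (b \<bullet> v2)\<^sup>2 + (b \<bullet> v3)\<^sup>2"
    using orthonormal3_inner_expand[OF o, of b b] by (simp add: power2_eq_square)
  moreover have "det (mat 1 + outer b m) = det F"
    using R by (simp add: G[symmetric] det_mul SO3_def)
  then have "1 + (b \<bullet> v1) * (m \<bullet> v1) + (b \<bullet> v2) * (m \<bullet> v2) + (b \<bullet> v3) * (m \<bullet> v3) > 0"
    using dF orthonormal3_inner_expand[OF o, of b m] by (simp add: det_mat_1_add_outer)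
  ultimately obtain k where k: "k\<^sup>2 = 1" and b2: "b \<bullet> v2 = 0" and m2: "m \<bullet> v2 = 0"
    and products: "(b \<bullet> v1) * (m \<bullet> v1) = - l3 * p\<^sup>2 / (l3 + l1)"
      "(b \<bullet> v1) * (m \<bullet> v3) = k * p * q * l3 / (l3 + l1)"
      "(b \<bullet> v3) * (m \<bullet> v1) = - k * p * q * l1 / (l3 + l1)"
      "(b \<bullet> v3) * (m \<bullet> v3) = k\<^sup>2 * q\<^sup>2 * l1 / (l3 + l1)"
    using rank_one_frame_unique[OF l gaps(1-4) _ frame] by blast
  have "0 < l3" using l by simp
  note formula = ball_james_component_products[OF gaps(5,6) rho l(1) this]
  have "outer b m = outer (ball_james_b rho l1 l3 v1 v3 k) (ball_james_m rho l1 l3 v1 v3 k)"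
    using l formula products b2 m2 ball_james_components[OF o, of rho l1 l3 k]
    by (intro orthonormal3_matrix_eq[OF o])
      (auto simp: inner_outer_mult_vec inner_commute p_def q_def r_def)
  with k show thesis by (rule that)
qed

lemma ball_james_distinct:
  assumes o: "orthonormal3 v1 v2 v3" and l: "0 < l1" "l1 < 1" "1 < l3" and rho: "rho \<noteq> 0"
  shows "outer (ball_james_b rho l1 l3 v1 v3 1) (ball_james_m rho l1 l3 v1 v3 1) \<noteq>
    outer (ball_james_b rho l1 l3 v1 v3 (-1)) (ball_james_m rho l1 l3 v1 v3 (-1))"
proof
  define p q r where "p = sqrt (1 - l1\<^sup>2)" and "q = sqrt (l3\<^sup>2 - 1)" and "r = sqrt (l3\<^sup>2 - l1\<^sup>2)"
  have gaps: "p > 0" "q > 0" "r\<^sup>2 = l3\<^sup>2 - l1\<^sup>2" "r > 0"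
    using sqrt_eigenvalue_gaps[OF l] by (simp_all add: p_def q_def r_def)
  have "0 < l3" using l by simp
  note formula = ball_james_component_products(2)[OF gaps(3,4) rho l(1) this]
  assume "outer (ball_james_b rho l1 l3 v1 v3 1) (ball_james_m rho l1 l3 v1 v3 1) =
    outer (ball_james_b rho l1 l3 v1 v3 (-1)) (ball_james_m rho l1 l3 v1 v3 (-1))"
  then have "v1 \<bullet> (outer (ball_james_b rho l1 l3 v1 v3 1) (ball_james_m rho l1 l3 v1 v3 1) *v v3) =
      v1 \<bullet> (outer (ball_james_b rho l1 l3 v1 v3 (-1)) (ball_james_m rho l1 l3 v1 v3 (-1)) *v v3)"
    by simp
  then have "p * q * l3 / (l3 + l1) = - p * q * l3 / (l3 + l1)"
    using formula[of p 1 q] formula[of p "-1" q]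
    by (simp add: inner_outer_mult_vec ball_james_components[OF o] p_def q_def r_def)
  then show False
    using gaps l by (simp add: field_simps)
qed

definition rank_one_connections :: "real^3^3 \<Rightarrow> ((real^3^3) \<times> (real^3^3)) set" where
  "rank_one_connections F = {(R, B). R \<in> SO3 \<and> (\<exists>b m. B = outer b m) \<and> R ** F - mat 1 = B}"

lemma ball_james_rank_one_connections:
  fixes F C :: "real^3^3"
  assumes o: "orthonormal3 v1 v2 v3" and CF: "transpose F ** F = C"
    and e1: "C *v v1 = l1\<^sup>2 *\<^sub>R v1" and e2: "C *v v2 = v2" and e3: "C *v v3 = l3\<^sup>2 *\<^sub>R v3"
    and l: "0 < l1" "l1 < 1" "1 < l3" and dF: "det F > 0" and rho: "rho \<noteq> 0"
  shows "card (rank_one_connections F) = 2"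
    and "snd ` rank_one_connections F = {outer (ball_james_b rho l1 l3 v1 v3 \<kappa>)
      (ball_james_m rho l1 l3 v1 v3 \<kappa>) | \<kappa>. \<kappa> \<in> {1, -1}}"
proof -
  define B where "B \<kappa> = outer (ball_james_b rho l1 l3 v1 v3 \<kappa>) (ball_james_m rho l1 l3 v1 v3 \<kappa>)"
    for \<kappa>
  note exists = ball_james_exists[OF o CF e1 e2 e3 l dF rho]
  obtain R1 R2 where R1: "R1 \<in> SO3" "R1 ** F - mat 1 = B 1"
    and R2: "R2 \<in> SO3" "R2 ** F - mat 1 = B (-1)"
    using exists[of 1] exists[of "-1"] unfolding B_def by auto
  have cancel: "R = R'" if "R ** F - mat 1 = R' ** F - mat 1" for R R' :: "real^3^3"
    using dF that by (auto intro: matrix_mul_right_cancel_det[of F])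
  have "rank_one_connections F = {(R1, B 1), (R2, B (-1))}"
  proof (intro equalityI subsetI)
    fix z assume "z \<in> rank_one_connections F"
    then obtain R b m where z: "z = (R, outer b m)" and R: "R \<in> SO3" "R ** F - mat 1 = outer b m"
      unfolding rank_one_connections_def by auto
    obtain k where "k\<^sup>2 = 1" and k: "outer b m = B k"
      using ball_james_unique[OF o CF e1 e2 e3 l dF rho R] unfolding B_def by blast
    then consider "k = 1" | "k = -1"
      by (auto simp: power2_eq_1_iff)
    then show "z \<in> {(R1, B 1), (R2, B (-1))}"
    proof cases
      case 1
      have "R = R1" by (rule cancel) (simp add: R(2) R1(2) k 1)
      then show ?thesis using z k 1 by simp
    next
      case 2
      have "R = R2" by (rule cancel) (simp add: R(2) R2(2) k 2)
      then show ?thesis using z k 2 by simp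
    qed
  next
    fix z assume "z \<in> {(R1, B 1), (R2, B (-1))}"
    then show "z \<in> rank_one_connections F"
      using R1 R2 unfolding rank_one_connections_def B_def by auto
  qed
  moreover have "B 1 \<noteq> B (-1)"
    unfolding B_def by (rule ball_james_distinct[OF o l rho])
  moreover have "{outer (ball_james_b rho l1 l3 v1 v3 \<kappa>) (ball_james_m rho l1 l3 v1 v3 \<kappa>) | \<kappa>.
      \<kappa> \<in> {1, -1}} = {B 1, B (-1)}"
    unfolding B_def by auto
  ultimately show "card (rank_one_connections F) = 2"
    and "snd ` rank_one_connections F = {outer (ball_james_b rho l1 l3 v1 v3 \<kappa>)
      (ball_james_m rho l1 l3 v1 v3 \<kappa>) | \<kappa>. \<kappa> \<in> {1, -1}}"
    by simp_all
qed

lemma twin_rank_one_connections: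
  fixes U R_hat :: "real^3^3" and e a n v1 v3 :: "real^3"
  assumes U: "pos_def_sym U" and e: "norm e = 1" and R_hat: "R_hat \<in> SO3"
    and a0: "a \<noteq> 0" and n0: "n \<noteq> 0"
    and twin: "R_hat ** (half_turn e ** U ** half_turn e) = U + outer a n"
    and CC1: "middle_eigenvalue U 1"
    and CC2: "a \<bullet> ((U ** cof (U ** U - mat 1)) *v n) = 0"
    and CC3: "trace (U ** U) - det (U ** U) - (norm a)\<^sup>2 * (norm n)\<^sup>2 / 4 - 2 \<ge> 0"
    and "f \<noteq> 1/2"
  defines "C \<equiv> (U + f *\<^sub>R outer n a) ** (U + f *\<^sub>R outer a n)"
  assumes l: "l1 > 0" "l3 > 0" and v: "norm v1 = 1" "norm v3 = 1" "v1 \<bullet> v3 = 0"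
    and e1: "C *v v1 = l1\<^sup>2 *\<^sub>R v1" and e3: "C *v v3 = l3\<^sup>2 *\<^sub>R v3"
    and extremal: "\<forall>mu x. x \<noteq> 0 \<longrightarrow> C *v x = mu *\<^sub>R x \<longrightarrow> l1\<^sup>2 \<le> mu \<and> mu \<le> l3\<^sup>2"
    and rho: "rho \<noteq> 0"
  shows "middle_eigenvalue C 1 \<and> l1\<^sup>2 \<le> 1 \<and> 1 \<le> l3\<^sup>2 \<and>
    card (rank_one_connections (f *\<^sub>R (U + outer a n) + (1 - f) *\<^sub>R U)) = 2 \<and>
    snd ` rank_one_connections (f *\<^sub>R (U + outer a n) + (1 - f) *\<^sub>R U) =
      {outer (ball_james_b rho l1 l3 v1 v3 \<kappa>) (ball_james_m rho l1 l3 v1 v3 \<kappa>) | \<kappa>.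
        \<kappa> \<in> {1, -1}}"
proof -
  define F where "F = U + f *\<^sub>R outer a n"
  have F_eq: "f *\<^sub>R (U + outer a n) + (1 - f) *\<^sub>R U = F"
    by (simp add: F_def algebra_simps)
  have U_sym: "transpose U = U" using U by (simp add: pos_def_sym_def)
  note interpolation = twin_interpolation[OF U e R_hat twin CC1 CC2, of f, folded C_def F_def]
  have CF: "transpose F ** F = C"
    by (simp add: F_def C_def transpose_add transpose_scalar transpose_outer U_sym)
  have "det F > 0"
    using interpolation(2) middle_eigenvalue_one_det(1)[OF U CC1] by simp
  have "0 < (norm a)\<^sup>2 * (norm n)\<^sup>2 * (f - 1/2)\<^sup>2"
    using a0 n0 \<open>f \<noteq> 1/2\<close> by simp
  then have gap: "trace C - det C - 2 > 0"
    using interpolation(3) CC3 by simp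
  have "transpose C = C"
    by (simp add: CF[symmetric] matrix_transpose_mul)
  note middle = gram_middle_eigenvalue_one[OF this interpolation(1) gap l v e1 e3 extremal]
  note connections = ball_james_rank_one_connections[OF orthonormal3_cross[OF v] CF e1 middle(1)
      e3 l(1) middle(2,3) \<open>det F > 0\<close> rho]
  show ?thesis
    unfolding F_eq using middle connections l by (simp add: power_le_one one_le_power less_imp_le)
qed

theorem corollary2:
  fixes U R_hat :: "real^3^3" and e a n :: "real^3"
  assumes U: "pos_def_sym U"
    and e: "norm e = 1"
    and R_hat: "R_hat \<in> SO3"
    and a0: "a \<noteq> 0" and n0: "n \<noteq> 0"
    and twin: "R_hat ** ((- mat 1 + 2 *\<^sub>R outer e e) ** U ** (- mat 1 + 2 *\<^sub>R outer e e))
               = U + outer a n"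
    and CC1: "middle_eigenvalue U 1"
    and CC2: "a \<bullet> ((U ** cof (U ** U - mat 1)) *v n) = 0"
    and CC3: "trace (U ** U) - det (U ** U) - (norm a)\<^sup>2 * (norm n)\<^sup>2 / 4 - 2 \<ge> 0"
  shows "\<forall>f \<in> {0..1}. f \<noteq> 1/2 \<longrightarrow>
     (let C = (U + f *\<^sub>R outer n a) ** (U + f *\<^sub>R outer a n);
          F = f *\<^sub>R (U + outer a n) + (1 - f) *\<^sub>R U
      in \<forall>l1 l3 v1 v3 rho.
        l1 > 0 \<longrightarrow> l3 > 0 \<longrightarrow>
        norm v1 = 1 \<longrightarrow> norm v3 = 1 \<longrightarrow> v1 \<bullet> v3 = 0 \<longrightarrow>
        C *v v1 = l1\<^sup>2 *\<^sub>R v1 \<longrightarrow> C *v v3 = l3\<^sup>2 *\<^sub>R v3 \<longrightarrow>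
        (\<forall>mu x. x \<noteq> 0 \<longrightarrow> C *v x = mu *\<^sub>R x \<longrightarrow> l1\<^sup>2 \<le> mu \<and> mu \<le> l3\<^sup>2) \<longrightarrow>
        rho \<noteq> 0 \<longrightarrow>
        (let b = (\<lambda>\<kappa>::real. (rho / sqrt (l3\<^sup>2 - l1\<^sup>2)) *\<^sub>R
                    ((l3 * sqrt (1 - l1\<^sup>2)) *\<^sub>R v1 + (\<kappa> * l1 * sqrt (l3\<^sup>2 - 1)) *\<^sub>R v3));
             m = (\<lambda>\<kappa>::real. ((1 / rho) * (l3 - l1) / sqrt (l3\<^sup>2 - l1\<^sup>2)) *\<^sub>R
                    ((- sqrt (1 - l1\<^sup>2)) *\<^sub>R v1 + (\<kappa> * sqrt (l3\<^sup>2 - 1)) *\<^sub>R v3));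
             S = {(R, B). R \<in> SO3 \<and> (\<exists>bb mm. B = outer bb mm) \<and> R ** F - mat 1 = B}
         in middle_eigenvalue C 1 \<and> l1\<^sup>2 \<le> 1 \<and> 1 \<le> l3\<^sup>2 \<and>
            card S = 2 \<and> snd ` S = {outer (b \<kappa>) (m \<kappa>) | \<kappa>. \<kappa> \<in> {1, -1}}))"
  unfolding Let_def rank_one_connections_def[symmetric] ball_james_b_def[symmetric]
    ball_james_m_def[symmetric]
  using twin_rank_one_connections[OF U e R_hat a0 n0 twin[folded half_turn_def] CC1 CC2 CC3]
  by blast

end
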